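(* There is an absolute constant $C>0$ such that for every $d\ge1$, a standard Gaussian random vector $\mathbf{w}\sim\mathcal{N}(0,I_d)$ satisfies $\mathbb{E}\|\mathbf{w}\|_T\le C\sqrt{d}$.
   Context: For $\mathbf{v}\in\mathbb{R}^d$ define \[\|\mathbf{v}\|_T^2=\sup_{\emptyset\ne S\subseteq[d]}\log^4(2d/|S|)\sum_{j\in S}v_j^2.\] *)

theory Defs
  imports "HOL-Probability.Probability"
begin

(* Vectors in R^d are functions nat => real on the index set {..<d} (= [d], shifted by 1). *)

definition normT :: "nat \<Rightarrow> (nat \<Rightarrow> real) \<Rightarrow> real" where
  "normT d v = sqrt (Max {(ln (2 * real d / real (card S))) ^ 4 * (\<Sum>j\<in>S. (v j)\<^sup>2)
                          | S. S \<subseteq> {..<d} \<and> S \<noteq> {}})"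

definition std_gaussian :: "nat \<Rightarrow> (nat \<Rightarrow> real) measure" where
  "std_gaussian d = PiM {..<d} (\<lambda>_. density lborel std_normal_density)"

end

theory Submission
  imports Defs
begin

text \<open>Write \<open>L = log (2d/|S|)\<close>. Young-type splitting gives \<open>L\<^sup>4 v\<^sub>j\<^sup>2 \<le> L\<^sup>5 + v\<^sub>j\<^sup>1\<^sup>0\<close>, and
  \<open>log y \<le> 5 y\<^bsup>1/5\<^esup>\<close> gives \<open>|S| L\<^sup>5 \<le> 5\<^sup>5 \<cdot> 2d\<close>; hence \<open>\<parallel>v\<parallel>\<^sub>T\<^sup>2 \<le> 6250 d + \<Sum>\<^sub>j v\<^sub>j\<^sup>1\<^sup>0\<close>
  deterministically. By AM-GM, \<open>\<surd>Y \<le> (Y + d)/(2\<surd>d)\<close>, which is linear in \<open>Y\<close>, and the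
  tenth moment of a standard normal is \<open>945\<close>, so \<open>E \<parallel>w\<parallel>\<^sub>T \<le> (6251 + 945)/2 \<cdot> \<surd>d\<close>.\<close>

lemma mult_le_power_add_power:
  fixes x y :: real
  assumes "0 \<le> x" "0 \<le> y"
  shows "x ^ n * y \<le> x ^ Suc n + y ^ Suc n"
proof (cases "y \<le> x")
  case True
  then have "x ^ n * y \<le> x ^ n * x" using assms by (intro mult_left_mono) simp_all
  then have "x ^ n * y \<le> x ^ Suc n" by (simp add: mult.commute)
  then show ?thesis using assms by (simp add: add_increasing2)
next
  case False
  then have "x ^ n * y \<le> y ^ Suc n" using assms by (simp add: mult_right_mono power_mono)
  then show ?thesis using assms by (simp add: add_increasing)
qed

lemma ln_power_le:
  fixes y :: real
  assumes "1 \<le> y" "0 < n"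
  shows "ln y ^ n \<le> real n ^ n * y"
proof -
  have y: "0 < y" using assms by simp
  have "ln (y powr (1 / n)) \<le> y powr (1 / n) - 1" using y by (intro ln_le_minus_one) simp
  then have "ln y \<le> n * y powr (1 / n)" using y assms(2) by (simp add: ln_powr field_simps)
  then have "ln y ^ n \<le> (n * y powr (1 / n)) ^ n" using assms by (intro power_mono) simp_all
  also have "\<dots> = real n ^ n * y"
    using y assms(2) by (simp add: power_mult_distrib powr_powr flip: powr_realpow)
  finally show ?thesis .
qed

lemma weighted_sum_le_power10:
  fixes v :: "nat \<Rightarrow> real"
  assumes "S \<subseteq> {..<d}" "S \<noteq> {}"
  shows "ln (2 * real d / real (card S)) ^ 4 * (\<Sum>j\<in>S. (v j)\<^sup>2) \<le> 6250 * real d + (\<Sum>j<d. v j ^ 10)"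
proof -
  have "finite S" using assms(1) finite_subset by blast
  then have k: "1 \<le> card S" using assms(2) by (simp add: Suc_le_eq card_gt_0_iff)
  have "card S \<le> d" using card_mono[OF finite_lessThan assms(1)] by simp
  then have y: "1 \<le> 2 * real d / real (card S)" using k by (simp add: field_simps)
  define L where "L = ln (2 * real d / real (card S))"
  have L: "0 \<le> L" unfolding L_def using y by simp
  have "L ^ 4 * (\<Sum>j\<in>S. (v j)\<^sup>2) = (\<Sum>j\<in>S. L ^ 4 * (v j)\<^sup>2)" by (simp add: sum_distrib_left)
  also have "\<dots> \<le> (\<Sum>j\<in>S. L ^ 5 + ((v j)\<^sup>2) ^ 5)"
    using L by (intro sum_mono) (simp add: mult_le_power_add_power[of L "(v _)\<^sup>2" 4, simplified])
  also have "\<dots> = real (card S) * L ^ 5 + (\<Sum>j\<in>S. v j ^ 10)"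
    by (simp add: sum.distrib flip: power_mult)
  also have "real (card S) * L ^ 5 \<le> 6250 * real d"
  proof -
    have "L ^ 5 \<le> 3125 * (2 * real d / real (card S))"
      unfolding L_def using ln_power_le[OF y, of 5] by simp
    then have "real (card S) * L ^ 5 \<le> real (card S) * (3125 * (2 * real d / real (card S)))"
      by (intro mult_left_mono) auto
    also have "\<dots> = 6250 * real d" using k by (simp add: field_simps)
    finally show ?thesis .
  qed
  also have "(\<Sum>j\<in>S. v j ^ 10) \<le> (\<Sum>j<d. v j ^ 10)"
    by (intro sum_mono2 assms) (auto simp: zero_le_even_power)
  finally show ?thesis unfolding L_def by simp
qed

lemma normT_le_sqrt_power10:
  fixes v :: "nat \<Rightarrow> real"
  assumes "1 \<le> d"
  shows "normT d v \<le> sqrt (6250 * real d + (\<Sum>j<d. v j ^ 10))"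
proof -
  let ?f = "\<lambda>S. ln (2 * real d / real (card S)) ^ 4 * (\<Sum>j\<in>S. (v j)\<^sup>2)"
  let ?\<S> = "{S. S \<subseteq> {..<d} \<and> S \<noteq> {}}"
  have A: "{?f S | S. S \<subseteq> {..<d} \<and> S \<noteq> {}} = ?f ` ?\<S>" by auto
  have "{0} \<in> ?\<S>" using assms by auto
  then have "Max (?f ` ?\<S>) \<le> 6250 * real d + (\<Sum>j<d. v j ^ 10)"
    by (subst Max_le_iff) (auto intro: weighted_sum_le_power10)
  then show ?thesis unfolding normT_def A by simp
qed

lemma sqrt_le_affine:
  fixes y a :: real
  assumes "0 \<le> y" "0 < a"
  shows "sqrt y \<le> (y + a) / (2 * sqrt a)"
  using arith_geo_mean_sqrt[of y a] assms by (simp add: real_sqrt_mult field_simps)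

lemma normT_le_affine_power10:
  fixes v :: "nat \<Rightarrow> real"
  assumes "1 \<le> d"
  shows "normT d v \<le> (6251 * real d + (\<Sum>j<d. v j ^ 10)) / (2 * sqrt (real d))"
proof -
  have "0 \<le> 6250 * real d + (\<Sum>j<d. v j ^ 10)" by (simp add: sum_nonneg zero_le_even_power)
  from sqrt_le_affine[OF this, of "real d"] assms normT_le_sqrt_power10[OF assms, of v]
  show ?thesis by (simp add: add.assoc)
qed

lemma std_normal_nn_moment_even:
  "(\<integral>\<^sup>+ x. ennreal (x ^ (2 * k)) \<partial>density lborel std_normal_density)
     = ennreal (fact (2 * k) / (2 ^ k * fact k))"
proof -
  have h: "has_bochner_integral lborel (\<lambda>x. std_normal_density x * x ^ (2 * k))
             (fact (2 * k) / (2 ^ k * fact k))"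
    by (rule std_normal_moment_even)
  have "(\<integral>\<^sup>+ x. ennreal (x ^ (2 * k)) \<partial>density lborel std_normal_density)
      = (\<integral>\<^sup>+ x. ennreal (std_normal_density x * x ^ (2 * k)) \<partial>lborel)"
    by (subst nn_integral_density) (auto simp: ennreal_mult' normal_density_nonneg mult.commute)
  also have "\<dots> = ennreal (fact (2 * k) / (2 ^ k * fact k))"
    using h by (subst nn_integral_eq_integral)
      (auto simp: has_bochner_integral_iff normal_density_nonneg zero_le_even_power)
  finally show ?thesis .
qed

lemma prob_space_std_gaussian: "prob_space (std_gaussian d)"
  unfolding std_gaussian_def by (intro prob_space_PiM) (simp add: prob_space_normal_density)

lemma measurable_std_gaussian_component:
  assumes "j < d"
  shows "(\<lambda>w. w j) \<in> borel_measurable (std_gaussian d)"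
proof -
  have "(\<lambda>w. w j) \<in> measurable (std_gaussian d) (density lborel std_normal_density)"
    unfolding std_gaussian_def using assms by (intro measurable_component_singleton) auto
  then show ?thesis by simp
qed

lemma borel_measurable_std_gaussian_sum_power:
  "(\<lambda>w. \<Sum>j<d. w j ^ k) \<in> borel_measurable (std_gaussian d)"
  by (intro borel_measurable_sum borel_measurable_power measurable_std_gaussian_component) simp

lemma std_gaussian_component_nn_moment_even:
  assumes "j < d"
  shows "(\<integral>\<^sup>+ w. ennreal (w j ^ (2 * k)) \<partial>std_gaussian d) = ennreal (fact (2 * k) / (2 ^ k * fact k))"
proof -
  have "(\<integral>\<^sup>+ w. ennreal (w j ^ (2 * k)) \<partial>std_gaussian d)
      = (\<integral>\<^sup>+ x. ennreal (x ^ (2 * k)) \<partial>distr (std_gaussian d) (density lborel std_normal_density) (\<lambda>w. w j))"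
    unfolding std_gaussian_def using assms
    by (subst nn_integral_distr) (auto intro: measurable_component_singleton)
  also have "\<dots> = ennreal (fact (2 * k) / (2 ^ k * fact k))"
    unfolding std_gaussian_def using assms
    by (subst distr_PiM_component) (auto simp: prob_space_normal_density std_normal_nn_moment_even)
  finally show ?thesis .
qed

lemma std_gaussian_nn_integral_affine_power10:
  assumes "0 \<le> a"
  shows "(\<integral>\<^sup>+ w. ennreal (a + (\<Sum>j<d. w j ^ 10)) \<partial>std_gaussian d) = ennreal (a + 945 * real d)"
proof -
  interpret prob_space "std_gaussian d" by (rule prob_space_std_gaussian)
  have moment: "(\<integral>\<^sup>+ w. ennreal (w j ^ 10) \<partial>std_gaussian d) = 945" if "j < d" for j
    using std_gaussian_component_nn_moment_even[OF that, of 5] by (simp add: fact_numeral)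
  have "(\<integral>\<^sup>+ w. ennreal (a + (\<Sum>j<d. w j ^ 10)) \<partial>std_gaussian d)
      = (\<integral>\<^sup>+ w. ennreal a + (\<Sum>j<d. ennreal (w j ^ 10)) \<partial>std_gaussian d)"
    using assms by (intro nn_integral_cong) (simp add: sum_nonneg zero_le_even_power)
  also have "\<dots> = ennreal a + (\<Sum>j<d. \<integral>\<^sup>+ w. ennreal (w j ^ 10) \<partial>std_gaussian d)"
  proof -
    have meas: "(\<lambda>w. ennreal (w j ^ 10)) \<in> borel_measurable (std_gaussian d)" if "j < d" for j
      using measurable_std_gaussian_component[OF that] by measurable
    have "(\<integral>\<^sup>+ w. (\<Sum>j<d. ennreal (w j ^ 10)) \<partial>std_gaussian d)
        = (\<Sum>j<d. \<integral>\<^sup>+ w. ennreal (w j ^ 10) \<partial>std_gaussian d)"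
      by (rule nn_integral_sum) (rule meas, simp)
    moreover have "(\<lambda>w. \<Sum>j<d. ennreal (w j ^ 10)) \<in> borel_measurable (std_gaussian d)"
      by (rule borel_measurable_sum) (rule meas, simp)
    ultimately show ?thesis
      by (subst nn_integral_add) (simp_all add: emeasure_space_1 del: sum_ennreal)
  qed
  also have "\<dots> = ennreal a + 945 * ennreal (real d)"
    by (simp add: moment ennreal_of_nat_eq_real_of_nat mult.commute)
  also have "\<dots> = ennreal (a + 945 * real d)"
    using assms by (simp add: ennreal_mult ennreal_plus)
  finally show ?thesis .
qed

theorem lemma4p3:
  shows "\<exists>C>0. \<forall>d\<ge>1. (\<integral>\<^sup>+ w. ennreal (normT d w) \<partial>std_gaussian d) \<le> ennreal (C * sqrt (real d))"
proof (intro exI[of _ 3598] conjI allI impI)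
  fix d :: nat assume d: "1 \<le> d"
  define c where "c = 1 / (2 * sqrt (real d))"
  have c: "0 \<le> c" unfolding c_def by simp
  have "(\<integral>\<^sup>+ w. ennreal (normT d w) \<partial>std_gaussian d)
      \<le> (\<integral>\<^sup>+ w. ennreal c * ennreal (6251 * real d + (\<Sum>j<d. w j ^ 10)) \<partial>std_gaussian d)"
  proof (intro nn_integral_mono)
    fix w :: "nat \<Rightarrow> real"
    have "normT d w \<le> c * (6251 * real d + (\<Sum>j<d. w j ^ 10))"
      using normT_le_affine_power10[OF d] by (simp add: c_def)
    then have "ennreal (normT d w) \<le> ennreal (c * (6251 * real d + (\<Sum>j<d. w j ^ 10)))"
      by (rule ennreal_leI)
    then show "ennreal (normT d w) \<le> ennreal c * ennreal (6251 * real d + (\<Sum>j<d. w j ^ 10))"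
      using c by (subst ennreal_mult [symmetric]) (simp_all add: sum_nonneg zero_le_even_power)
  qed
  also have "\<dots> = ennreal c * ennreal (6251 * real d + 945 * real d)"
    using borel_measurable_std_gaussian_sum_power[where k = 10]
    by (subst nn_integral_cmult, measurable)
      (simp_all add: std_gaussian_nn_integral_affine_power10)
  also have "\<dots> = ennreal (3598 * sqrt (real d))"
  proof -
    have "c * (6251 * real d + 945 * real d) = 3598 * sqrt (real d)"
      unfolding c_def using d by (simp add: field_simps flip: real_sqrt_mult)
    then show ?thesis using c by (simp flip: ennreal_mult)
  qed
  finally show "(\<integral>\<^sup>+ w. ennreal (normT d w) \<partial>std_gaussian d) \<le> ennreal (3598 * sqrt (real d))" .
qed simp

end
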